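(* Let $G(\mathcal V,\mathcal E)$ be a finite simple directed graph and $f\ge 0$ an integer, and assume Condition 1 holds for $G$. Let $A,B,F$ be a partition of $\mathcal V$ with $A,B$ both non-empty and $|F|\le f$. If it is not the case that $B \Rightarrow_{\mathcal V - F} A$, then there exist sets $A',B'$ such that: $A'$ and $B'$ are both non-empty; $A',B'$ form a partition of $A\cup B$; $A'\subseteq A$ and $B\subseteq B'$; and $B'\not\rightarrow A'$.
   Context: For disjoint sets $X,Y\subseteq\mathcal V$ with $Y$ non-empty, $X\rightarrow Y$ means that $X$ contains at least $f+1$ distinct nodes $i$ such that $(i,j)\in\mathcal E$ for some $j\in Y$; $X\not\rightarrow Y$ means this fails. Condition 1: for every partition $L,C,R,F$ of $\mathcal V$ (with $C$ or $F$ possibly empty) such that $L,R$ are non-empty and $|F|\le f$, either $L\cup C\rightarrow R$ or $R\cup C\rightarrow L$. An $(X,y)$-path is a directed path from some node of $X$ to the node $y\notin X$; it excludes $F$ if it contains no node of $F$; $(X,y)$-paths are disjoint if they pairwise share only $y$. For pairwise disjoint $X,Y,F$ with $|F|\le f$, $X \Rightarrow_{\mathcal V - F} Y$ means: $Y=\emptyset$, or every $y\in Y$ has at least $f+1$ pairwise disjoint $(X,y)$-paths excluding $F$. *)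

theory Defs
  imports Main
begin

definition simple_digraph :: "'a set \<Rightarrow> ('a \<times> 'a) set \<Rightarrow> bool" where
  "simple_digraph V E \<longleftrightarrow> finite V \<and> E \<subseteq> V \<times> V \<and> (\<forall>v. (v, v) \<notin> E)"

definition reaches :: "nat \<Rightarrow> ('a \<times> 'a) set \<Rightarrow> 'a set \<Rightarrow> 'a set \<Rightarrow> bool" where
  "reaches f E X Y \<longleftrightarrow> f + 1 \<le> card {i \<in> X. \<exists>j \<in> Y. (i, j) \<in> E}"

definition condition1 :: "nat \<Rightarrow> 'a set \<Rightarrow> ('a \<times> 'a) set \<Rightarrow> bool" where
  "condition1 f V E \<longleftrightarrow>
    (\<forall>L C R F. L \<union> C \<union> R \<union> F = V \<and> L \<inter> C = {} \<and> L \<inter> R = {} \<and> L \<inter> F = {}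
        \<and> C \<inter> R = {} \<and> C \<inter> F = {} \<and> R \<inter> F = {}
        \<and> L \<noteq> {} \<and> R \<noteq> {} \<and> card F \<le> f
      \<longrightarrow> reaches f E (L \<union> C) R \<or> reaches f E (R \<union> C) L)"

definition dpath :: "'a set \<Rightarrow> ('a \<times> 'a) set \<Rightarrow> 'a list \<Rightarrow> bool" where
  "dpath V E p \<longleftrightarrow> p \<noteq> [] \<and> distinct p \<and> set p \<subseteq> V
      \<and> (\<forall>k. Suc k < length p \<longrightarrow> (p ! k, p ! Suc k) \<in> E)"

definition Xy_path :: "'a set \<Rightarrow> ('a \<times> 'a) set \<Rightarrow> 'a set \<Rightarrow> 'a \<Rightarrow> 'a list \<Rightarrow> bool" where
  "Xy_path V E X y p \<longleftrightarrow> dpath V E p \<and> hd p \<in> X \<and> last p = y"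

definition reaches_paths :: "nat \<Rightarrow> 'a set \<Rightarrow> ('a \<times> 'a) set \<Rightarrow> 'a set \<Rightarrow> 'a set \<Rightarrow> 'a set \<Rightarrow> bool" where
  "reaches_paths f V E F X Y \<longleftrightarrow> Y = {} \<or>
     (\<forall>y \<in> Y. \<exists>P. finite P \<and> f + 1 \<le> card P
        \<and> (\<forall>p \<in> P. Xy_path V E X y p \<and> set p \<inter> F = {})
        \<and> (\<forall>p \<in> P. \<forall>q \<in> P. p \<noteq> q \<longrightarrow> set p \<inter> set q \<subseteq> {y}))"

end

theory Submission
  imports Defs "HOL-Library.Sublist"
begin

text \<open>If some y in A is not joined to B by f + 1 paths that avoid F and are disjoint apart
  from y, then by Menger's theorem at most f vertices of A \<union> B - {y} separate B from the
  in-neighbours of y. Take for A' the vertex y together with everything that still reaches an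
  in-neighbour of y past this separator: an edge entering A' from the rest of A \<union> B must start
  in the separator, so fewer than f + 1 vertices of B' = A \<union> B - A' have edges into A'.\<close>

section \<open>Walks\<close>

fun walk :: "('a \<times> 'a) set \<Rightarrow> 'a list \<Rightarrow> bool" where
  "walk E [] = True"
| "walk E [v] = True"
| "walk E (u # v # vs) = ((u, v) \<in> E \<and> walk E (v # vs))"

lemma walk_Cons: "walk E (u # vs) = (walk E vs \<and> (vs \<noteq> [] \<longrightarrow> (u, hd vs) \<in> E))"
  by (cases vs) auto

lemma walk_append:
  "walk E (xs @ ys) = (walk E xs \<and> walk E ys \<and> (xs \<noteq> [] \<longrightarrow> ys \<noteq> [] \<longrightarrow> (last xs, hd ys) \<in> E))"
  by (induction xs) (auto simp: walk_Cons)

lemma walk_append_tl: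
  assumes "walk E xs" "walk E ys" "xs \<noteq> []" "ys \<noteq> []" "last xs = hd ys"
  shows "walk E (xs @ tl ys)"
proof -
  have "walk E (hd ys # tl ys)" using assms(2,4) by simp
  then show ?thesis using assms(1,5) by (auto simp: walk_append walk_Cons)
qed

lemma last_append_tl: "xs \<noteq> [] \<Longrightarrow> ys \<noteq> [] \<Longrightarrow> last xs = hd ys \<Longrightarrow> last (xs @ tl ys) = last ys"
  by (cases ys) auto

lemma walk_mono: "walk E p \<Longrightarrow> E \<subseteq> E' \<Longrightarrow> walk E' p"
  by (induction E p rule: walk.induct) auto

lemma walk_rev: "walk E p \<Longrightarrow> walk (E\<inverse>) (rev p)"
  by (induction E p rule: walk.induct) (auto simp: walk_append)

lemma walk_prefix: "prefix q p \<Longrightarrow> walk E p \<Longrightarrow> walk E q"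
  by (auto simp: prefix_def walk_append)

lemma walk_nth: "walk E p \<Longrightarrow> Suc k < length p \<Longrightarrow> (p ! k, p ! Suc k) \<in> E"
proof (induction p arbitrary: k rule: walk.induct)
  case (3 E u v vs) then show ?case by (cases k) auto
qed auto

lemma walk_rtrancl: "walk E p \<Longrightarrow> p \<noteq> [] \<Longrightarrow> (hd p, last p) \<in> E\<^sup>*"
  by (induction E p rule: walk.induct) (auto intro: converse_rtrancl_into_rtrancl)

lemma walk_avoiding: "walk E p \<Longrightarrow> set p \<inter> S = {} \<Longrightarrow> walk (Restr E (- S)) p"
  by (induction E p rule: walk.induct) auto

lemma walk_within: "walk G p \<Longrightarrow> G \<subseteq> W \<times> W \<Longrightarrow> hd p \<in> W \<Longrightarrow> set p \<subseteq> W"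
  by (induction G p rule: walk.induct) (simp_all, blast)

lemma walk_reaches_avoiding:
  assumes "walk E p" "v \<in> set p" "v \<notin> S" "set (butlast p) \<inter> S = {}"
  shows "(hd p, v) \<in> (Restr E (- S))\<^sup>*"
proof -
  obtain p1 p2 where p: "p = p1 @ v # p2" using assms(2) split_list by metis
  have "prefix (p1 @ [v]) p" by (simp add: p)
  then have "walk E (p1 @ [v])" using assms(1) walk_prefix by blast
  moreover have "set p1 \<subseteq> set (butlast p)" by (simp add: p butlast_append)
  then have "set (p1 @ [v]) \<inter> S = {}" using assms(3,4) by auto
  ultimately have "(hd (p1 @ [v]), last (p1 @ [v])) \<in> (Restr E (- S))\<^sup>*"
    using walk_avoiding walk_rtrancl by blast
  moreover have "hd (p1 @ [v]) = hd p" by (cases p1) (simp_all add: p)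
  ultimately show ?thesis by simp
qed

lemma set_butlast_last: "xs \<noteq> [] \<Longrightarrow> set xs = insert (last xs) (set (butlast xs))"
  by (induction xs) auto

lemma rtrancl_avoiding_iff: "(u, w) \<in> (Restr E (- S))\<^sup>* \<Longrightarrow> u \<notin> S \<longleftrightarrow> w \<notin> S"
  by (induction rule: converse_rtrancl_induct) auto

lemma rtrancl_enters_or_avoids:
  assumes "(u, b) \<in> R\<^sup>*"
  shows "(\<exists>w\<in>X. (u, w) \<in> (R \<inter> (- X) \<times> UNIV)\<^sup>*) \<or> (u, b) \<in> (Restr R (- X))\<^sup>*"
  using assms
proof (induction rule: converse_rtrancl_induct)
  case base then show ?case by (cases "b \<in> X") auto
next
  case (step u u')
  then show ?case
    by (cases "u \<in> X"; cases "u' \<in> X") (auto intro: converse_rtrancl_into_rtrancl)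
qed

section \<open>Menger's theorem\<close>

definition separates :: "('a \<times> 'a) set \<Rightarrow> 'a set \<Rightarrow> 'a set \<Rightarrow> 'a set \<Rightarrow> bool" where
  "separates E A B S \<longleftrightarrow> (\<forall>a\<in>A - S. \<forall>b\<in>B - S. (a, b) \<notin> (Restr E (- S))\<^sup>*)"

definition linkage :: "('a \<times> 'a) set \<Rightarrow> 'a set \<Rightarrow> 'a set \<Rightarrow> 'a list set \<Rightarrow> bool" where
  "linkage E A B P \<longleftrightarrow> finite P \<and>
     (\<forall>p\<in>P. p \<noteq> [] \<and> distinct p \<and> walk E p \<and> hd p \<in> A \<and> last p \<in> B) \<and>
     (\<forall>p\<in>P. \<forall>q\<in>P. p \<noteq> q \<longrightarrow> set p \<inter> set q = {})"

definition fan :: "('a \<times> 'a) set \<Rightarrow> 'a set \<Rightarrow> 'a set \<Rightarrow> ('a \<Rightarrow> 'a list) \<Rightarrow> bool" where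
  "fan E A X p \<longleftrightarrow>
     (\<forall>a\<in>X. p a \<noteq> [] \<and> distinct (p a) \<and> walk E (p a) \<and> hd (p a) \<in> A \<and> last (p a) = a
        \<and> set (butlast (p a)) \<inter> X = {}) \<and>
     (\<forall>a\<in>X. \<forall>a'\<in>X. a \<noteq> a' \<longrightarrow> set (p a) \<inter> set (p a') = {})"

lemma separates_converse: "separates (E\<inverse>) B A S = separates E A B S"
proof -
  have "Restr (E\<inverse>) (- S) = (Restr E (- S))\<inverse>" by auto
  then show ?thesis unfolding separates_def by (auto simp: rtrancl_converse)
qed

lemma separates_superset:
  assumes "separates E' A B S" "S \<subseteq> T" "Restr E (- T) \<subseteq> E'"
  shows "separates E A B T"
proof -
  have "Restr E (- T) \<subseteq> Restr E' (- S)" using assms(2,3) by auto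
  then show ?thesis using assms(1,2) rtrancl_mono unfolding separates_def by blast
qed

lemma separates_insert_edge_end:
  assumes "separates (E - {(x, z)}) A B S"
  shows "separates E A B (insert x S)" "separates E A B (insert z S)"
proof -
  have "Restr E (- insert x S) \<subseteq> E - {(x, z)}" "Restr E (- insert z S) \<subseteq> E - {(x, z)}"
    by auto
  then show "separates E A B (insert x S)" "separates E A B (insert z S)"
    using separates_superset[OF assms subset_insertI] by blast+
qed

text \<open>If X separates A from B, an A--B path avoiding T reaches X through vertices outside X,
  hence without using the deleted edge out of x.\<close>
lemma separates_delete_edge:
  assumes "x \<in> X" "separates E A B X" "separates (E - {(x, z)}) A X T"
  shows "separates E A B T"
  unfolding separates_def
proof (intro ballI notI)
  fix a b assume a: "a \<in> A - T" and b: "b \<in> B - T"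
    and ab: "(a, b) \<in> (Restr E (- T))\<^sup>*"
  let ?R = "Restr E (- T)"
  show False
  proof (cases "\<exists>w\<in>X. (a, w) \<in> (?R \<inter> (- X) \<times> UNIV)\<^sup>*")
    case True
    then obtain w where w: "w \<in> X" "(a, w) \<in> (?R \<inter> (- X) \<times> UNIV)\<^sup>*" by blast
    have "?R \<inter> (- X) \<times> UNIV \<subseteq> Restr (E - {(x, z)}) (- T)" using assms(1) by auto
    then have aw: "(a, w) \<in> (Restr (E - {(x, z)}) (- T))\<^sup>*"
      using w(2) rtrancl_mono by blast
    moreover have "w \<notin> T" using rtrancl_avoiding_iff[OF aw] a by simp
    ultimately show False using assms(3) a w(1) unfolding separates_def by blast
  next
    case False
    then have aX: "a \<notin> X" by blast
    have "(a, b) \<in> (Restr ?R (- X))\<^sup>*"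
      using rtrancl_enters_or_avoids[OF ab, of X] False by blast
    moreover have "Restr ?R (- X) \<subseteq> Restr E (- X)" by blast
    ultimately have abX: "(a, b) \<in> (Restr E (- X))\<^sup>*" using rtrancl_mono by blast
    moreover have "b \<notin> X" using rtrancl_avoiding_iff[OF abX] aX by simp
    ultimately show False using assms(2) a b aX unfolding separates_def by blast
  qed
qed

lemma linkage_mono: "linkage E A B P \<Longrightarrow> E \<subseteq> E' \<Longrightarrow> linkage E' A B P"
  unfolding linkage_def by (meson walk_mono)

lemma linkage_of_family:
  assumes "finite X"
    and "\<And>a. a \<in> X \<Longrightarrow> c a \<noteq> [] \<and> distinct (c a) \<and> walk E (c a) \<and> hd (c a) \<in> A \<and> last (c a) \<in> B"
    and "\<And>a a'. a \<in> X \<Longrightarrow> a' \<in> X \<Longrightarrow> a \<noteq> a' \<Longrightarrow> set (c a) \<inter> set (c a') = {}"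
  shows "linkage E A B (c ` X) \<and> card (c ` X) = card X"
proof -
  have "inj_on c X"
  proof (rule inj_onI, rule ccontr)
    fix a a' assume "a \<in> X" "a' \<in> X" "c a = c a'" "a \<noteq> a'"
    then show False using assms(2,3) by fastforce
  qed
  then show ?thesis using assms unfolding linkage_def by (auto simp: card_image)
qed

lemma first_hit_prefix:
  assumes "v \<in> set p" "v \<in> X"
  obtains q where "prefix q p" "q \<noteq> []" "last q \<in> X" "set (butlast q) \<inter> X = {}"
proof
  let ?d = "dropWhile (\<lambda>v. v \<notin> X) p"
  let ?q = "takeWhile (\<lambda>v. v \<notin> X) p @ [hd ?d]"
  have d: "?d \<noteq> []" using assms by (auto simp: dropWhile_eq_Nil_conv)
  then have "p = ?q @ tl ?d" by simp
  then show "prefix ?q p" by (metis prefixI)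
  show "?q \<noteq> []" by simp
  show "last ?q \<in> X" using hd_dropWhile[OF d] by simp
  show "set (butlast ?q) \<inter> X = {}" by (auto dest: set_takeWhileD)
qed

text \<open>Truncating each path at its first vertex in X keeps the paths disjoint; when there
  are card X of them their ends exhaust X.\<close>
lemma linkage_to_fan:
  assumes P: "linkage E A X P" "card P = card X" and "finite X"
  obtains p where "fan E A X p"
proof -
  have "\<exists>t. prefix t r \<and> t \<noteq> [] \<and> last t \<in> X \<and> set (butlast t) \<inter> X = {}" if r: "r \<in> P" for r
  proof -
    have "r \<noteq> []" "last r \<in> X" using P(1) r unfolding linkage_def by auto
    then show ?thesis by (rule first_hit_prefix[OF last_in_set]) blast
  qed
  then have "\<forall>r\<in>P. \<exists>t. prefix t r \<and> t \<noteq> [] \<and> last t \<in> X \<and> set (butlast t) \<inter> X = {}" by blast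
  from bchoice[OF this] obtain t
    where t: "\<forall>r\<in>P. prefix (t r) r \<and> t r \<noteq> [] \<and> last (t r) \<in> X \<and> set (butlast (t r)) \<inter> X = {}"
    by blast
  have disj: "set (t r) \<inter> set (t r') = {}" if "r \<in> P" "r' \<in> P" "r \<noteq> r'" for r r'
  proof -
    have "set r \<inter> set r' = {}" using P(1) that unfolding linkage_def by blast
    then show ?thesis using t that set_mono_prefix by blast
  qed
  have inj: "inj_on (last \<circ> t) P"
  proof (rule inj_onI, rule ccontr)
    fix r r' assume rr: "r \<in> P" "r' \<in> P" "(last \<circ> t) r = (last \<circ> t) r'" "r \<noteq> r'"
    have "last (t r) \<in> set (t r) \<inter> set (t r')"
      using rr(1-3) t by (metis IntI comp_apply last_in_set)
    then show False using disj[OF rr(1,2,4)] by blast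
  qed
  have img: "(last \<circ> t) ` P = X"
  proof (rule card_subset_eq[OF \<open>finite X\<close>])
    show "(last \<circ> t) ` P \<subseteq> X" using t by auto
    show "card ((last \<circ> t) ` P) = card X" by (simp only: card_image[OF inj] P(2))
  qed
  define r where "r a = the_inv_into P (last \<circ> t) a" for a
  have r: "r a \<in> P" "last (t (r a)) = a" if "a \<in> X" for a
    using that inj img the_inv_into_into[of "last \<circ> t" P a P] f_the_inv_into_f[of "last \<circ> t" P a]
    unfolding r_def by auto
  have "(t \<circ> r) a \<noteq> [] \<and> distinct ((t \<circ> r) a) \<and> walk E ((t \<circ> r) a) \<and> hd ((t \<circ> r) a) \<in> A
      \<and> last ((t \<circ> r) a) = a \<and> set (butlast ((t \<circ> r) a)) \<inter> X = {}" if a: "a \<in> X" for a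
  proof -
    obtain s where s: "r a = t (r a) @ s" using t r(1)[OF a] prefixE by metis
    have "r a \<noteq> [] \<and> distinct (r a) \<and> walk E (r a) \<and> hd (r a) \<in> A"
      using P(1) r(1)[OF a] unfolding linkage_def by blast
    moreover have "t (r a) \<noteq> []" "set (butlast (t (r a))) \<inter> X = {}"
      using t r(1)[OF a] by auto
    ultimately show ?thesis
      using r(2)[OF a] s walk_append[of E "t (r a)" s] distinct_append[of "t (r a)" s]
        hd_append2[of "t (r a)" s] by auto
  qed
  moreover have "set ((t \<circ> r) a) \<inter> set ((t \<circ> r) a') = {}" if "a \<in> X" "a' \<in> X" "a \<noteq> a'" for a a'
    using that r disj by (metis comp_apply)
  ultimately have "fan E A X (t \<circ> r)" unfolding fan_def by blast
  then show ?thesis using that by blast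
qed

text \<open>A forward fan into X \<supseteq> S and a backward fan into Y \<supseteq> S can only
  meet in S, since otherwise they would combine to an A--B path avoiding
  S.\<close>
lemma fans_meet_in_separator:
  assumes "separates E A B S" "S \<subseteq> X" "S \<subseteq> Y" "fan E A X p" "fan (E\<inverse>) B Y q"
    and "a \<in> X" "b \<in> Y" "v \<in> set (p a)" "v \<in> set (q b)"
  shows "v \<in> S \<and> v = a \<and> v = b"
proof -
  let ?R = "Restr E (- S)"
  have p: "walk E (p a)" "p a \<noteq> []" "hd (p a) \<in> A" "last (p a) = a" "set (butlast (p a)) \<inter> X = {}"
    using assms(4,6) unfolding fan_def by auto
  have q: "walk (E\<inverse>) (q b)" "q b \<noteq> []" "hd (q b) \<in> B" "last (q b) = b" "set (butlast (q b)) \<inter> Y = {}"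
    using assms(5,7) unfolding fan_def by auto
  have "v \<in> S"
  proof (rule ccontr)
    assume v: "v \<notin> S"
    have pv: "(hd (p a), v) \<in> ?R\<^sup>*"
      using walk_reaches_avoiding[OF p(1) assms(8) v] p(5) assms(2) by blast
    have "(hd (q b), v) \<in> (Restr (E\<inverse>) (- S))\<^sup>*"
      using walk_reaches_avoiding[OF q(1) assms(9) v] q(5) assms(3) by blast
    then have vq: "(v, hd (q b)) \<in> ?R\<^sup>*"
      by (metis converse_Int converse_Times converse_converse rtrancl_converseD)
    have "(hd (p a), hd (q b)) \<in> ?R\<^sup>*" using pv vq by (rule rtrancl_trans)
    moreover have "hd (p a) \<notin> S" "hd (q b) \<notin> S"
      using rtrancl_avoiding_iff[OF pv] rtrancl_avoiding_iff[OF vq] v by simp_all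
    ultimately show False using assms(1) p(3) q(3) unfolding separates_def by blast
  qed
  moreover have "set (p a) = insert a (set (butlast (p a)))" "set (q b) = insert b (set (butlast (q b)))"
    using set_butlast_last p(2,4) q(2,4) by metis+
  ultimately show ?thesis using assms(2,3,8,9) p(5) q(5) by blast
qed

text \<open>Joining the fans along the edge (x, z) (for x) and at the common end
  (for the vertices of S) yields card S + 1 disjoint A--B paths.\<close>
lemma fans_join_through_edge:
  assumes sep: "separates E' A B S" and "finite S" "x \<notin> S" "z \<notin> S" "(x, z) \<in> E" "E' \<subseteq> E"
    and p: "fan E' A (insert x S) p" and q: "fan (E'\<inverse>) B (insert z S) q"
  shows "\<exists>P. linkage E A B P \<and> card P = card (insert x S)"
proof -
  define s where "s a = (if a = x then z else a)" for a
  define c where "c a = (if a = x then p x @ rev (q z) else p a @ tl (rev (q a)))" for a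
  have meet: "v \<in> S \<and> v = a \<and> v = b"
    if "a \<in> insert x S" "b \<in> insert z S" "v \<in> set (p a)" "v \<in> set (q b)" for a b v
    using fans_meet_in_separator[OF sep _ _ p q that] by blast
  have pa: "p a \<noteq> [] \<and> distinct (p a) \<and> walk E (p a) \<and> hd (p a) \<in> A \<and> last (p a) = a"
    if "a \<in> insert x S" for a
    using p that walk_mono[OF _ \<open>E' \<subseteq> E\<close>] unfolding fan_def by blast
  have qb: "rev (q b) \<noteq> [] \<and> distinct (rev (q b)) \<and> walk E (rev (q b)) \<and> last (rev (q b)) \<in> B
      \<and> hd (rev (q b)) = b" if "b \<in> insert z S" for b
  proof -
    have "walk (E'\<inverse>) (q b)" "q b \<noteq> []" "distinct (q b)" "hd (q b) \<in> B" "last (q b) = b"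
      using q that unfolding fan_def by auto
    then show ?thesis using walk_rev[of "E'\<inverse>" "q b"] walk_mono[OF _ \<open>E' \<subseteq> E\<close>]
      by (simp add: hd_rev last_rev)
  qed
  have tl: "set (tl xs) \<subseteq> set xs" for xs :: "'a list" by (cases xs) auto
  have c_set: "set (c a) \<subseteq> set (p a) \<union> set (q (s a))" for a
    using tl[of "rev (q a)"] by (auto simp: c_def s_def)
  have c_path: "c a \<noteq> [] \<and> distinct (c a) \<and> walk E (c a) \<and> hd (c a) \<in> A \<and> last (c a) \<in> B"
    if a: "a \<in> insert x S" for a
  proof (cases "a = x")
    case True
    have "set (p x) \<inter> set (q z) = {}" using meet \<open>x \<notin> S\<close> by blast
    then show ?thesis using True pa[OF a] qb[of z] \<open>(x, z) \<in> E\<close>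
      by (auto simp: c_def walk_append)
  next
    case False
    have aS: "a \<in> insert z S" using a False by blast
    have r: "rev (q a) = a # tl (rev (q a))" using qb[OF aS] by (metis list.collapse)
    have "a \<notin> set (tl (rev (q a)))" using qb[OF aS] r by (metis distinct.simps(2))
    then have "set (p a) \<inter> set (tl (rev (q a))) = {}" using meet[OF a aS] tl[of "rev (q a)"] by auto
    moreover have "last (p a @ tl (rev (q a))) = last (rev (q a))"
      using pa[OF a] qb[OF aS] by (simp add: last_append_tl)
    moreover have "walk E (p a @ tl (rev (q a)))"
      using pa[OF a] qb[OF aS] by (intro walk_append_tl) simp_all
    ultimately show ?thesis using False pa[OF a] qb[OF aS] by (auto simp: c_def distinct_tl)
  qed
  have s_range: "s a \<in> insert z S" if "a \<in> insert x S" for a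
    using that by (auto simp: s_def)
  have cross: "set (p b) \<inter> set (q (s b')) = {}"
    if bb: "b \<in> insert x S" "b' \<in> insert x S" "b \<noteq> b'" for b b'
  proof -
    have False if "v \<in> set (p b)" "v \<in> set (q (s b'))" for v
    proof -
      have "v \<in> S \<and> v = b \<and> v = s b'" using meet[OF bb(1) s_range[OF bb(2)] that] .
      then show False using bb \<open>x \<notin> S\<close> \<open>z \<notin> S\<close> by (auto simp: s_def split: if_splits)
    qed
    then show ?thesis by blast
  qed
  have c_disj: "set (c a) \<inter> set (c a') = {}"
    if aa: "a \<in> insert x S" "a' \<in> insert x S" "a \<noteq> a'" for a a'
  proof -
    have "s a \<noteq> s a'" using aa \<open>z \<notin> S\<close> by (auto simp: s_def)
    then have "set (q (s a)) \<inter> set (q (s a')) = {}"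
      using q s_range aa unfolding fan_def by blast
    moreover have "set (p a) \<inter> set (p a') = {}" using p aa unfolding fan_def by blast
    ultimately show ?thesis using c_set[of a] c_set[of a'] cross[OF aa] cross[OF aa(2,1)] aa(3) by blast
  qed
  show ?thesis
    using linkage_of_family[of "insert x S" c E A B] \<open>finite S\<close> c_path c_disj by blast
qed

text \<open>Induction on the number of edges, deleting one edge (x, z): if that destroys all small
  separators we are done; otherwise a small separator S of the smaller graph gives two minimum
  separators S + x and S + z of the original, and the induction hypothesis provides fans into each
  of them, which join through the deleted edge.\<close>
theorem menger:
  assumes "finite E" "finite A" "finite B"
    and "\<And>T. finite T \<Longrightarrow> separates E A B T \<Longrightarrow> k \<le> card T"
  shows "\<exists>P. linkage E A B P \<and> card P = k"
  using assms
proof (induction "card E" arbitrary: E A B k rule: less_induct)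
  case less
  show ?case
  proof (cases "E = {}")
    case True
    then have "separates E A B (A \<inter> B)" by (auto simp: separates_def)
    then have "k \<le> card (A \<inter> B)" using less.prems(2,4) by simp
    then obtain C where C: "C \<subseteq> A \<inter> B" "card C = k" by (meson obtain_subset_with_card_n)
    moreover have "finite C" using C(1) less.prems(2) finite_subset by blast
    ultimately show ?thesis
      using linkage_of_family[of C "\<lambda>v. [v]" E A B] by auto
  next
    case False
    then obtain x z where xz: "(x, z) \<in> E" by auto
    define E' where "E' = E - {(x, z)}"
    have E': "card E' < card E" "finite E'" "E' \<subseteq> E"
      using card_Diff1_less[OF less.prems(1) xz] less.prems(1) by (auto simp: E'_def)
    show ?thesis
    proof (cases "\<forall>T. finite T \<longrightarrow> separates E' A B T \<longrightarrow> k \<le> card T")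
      case True
      have "\<exists>P. linkage E' A B P \<and> card P = k"
        by (rule less.hyps[OF E'(1,2) less.prems(2,3)]) (use True in blast)
      then show ?thesis using linkage_mono[OF _ E'(3)] by blast
    next
      case False
      then obtain S where S: "finite S" "separates E' A B S" "card S < k" by (auto simp: not_le)
      have sep_x: "separates E A B (insert x S)" and sep_z: "separates E A B (insert z S)"
        using separates_insert_edge_end[OF S(2)[unfolded E'_def]] by blast+
      then have "k \<le> card (insert x S)" "k \<le> card (insert z S)"
        using less.prems(4) S(1) by simp_all
      then have xS: "x \<notin> S" "card (insert x S) = k" and zS: "z \<notin> S" "card (insert z S) = k"
        using S(1,3) by (auto simp: card_insert_if split: if_splits)
      have "separates E A B T" if "separates E' A (insert x S) T" for T
        using separates_delete_edge[of x "insert x S" E A B z T] sep_x that by (simp add: E'_def)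
      then have "\<exists>P. linkage E' A (insert x S) P \<and> card P = k"
        by (intro less.hyps[OF E'(1,2) less.prems(2)]) (auto simp: S(1) intro: less.prems(4))
      then obtain p where p: "fan E' A (insert x S) p"
        using linkage_to_fan S(1) xS(2) by (metis finite_insert)
      have "separates E A B T" if "separates (E'\<inverse>) B (insert z S) T" for T
      proof -
        have "separates (E\<inverse>) B A (insert z S)" using sep_z separates_converse by blast
        moreover have "E'\<inverse> = E\<inverse> - {(z, x)}" by (auto simp: E'_def)
        ultimately have "separates (E\<inverse>) B A T" using separates_delete_edge[of z "insert z S" "E\<inverse>" B A x T] that by simp
        then show ?thesis using separates_converse by blast
      qed
      then have "\<exists>Q. linkage (E'\<inverse>) B (insert z S) Q \<and> card Q = k"
        using E'(1,2) by (intro less.hyps[of "E'\<inverse>"]) (auto simp: S(1) less.prems(3) intro: less.prems(4))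
      then obtain q where q: "fan (E'\<inverse>) B (insert z S) q"
        using linkage_to_fan S(1) zS(2) by (metis finite_insert)
      show ?thesis
        using fans_join_through_edge[OF S(2,1) xS(1) zS(1) xz E'(3) p q] xS(2) by simp
    qed
  qed
qed

section \<open>Cutting off a vertex with few disjoint paths\<close>

lemma linkage_extends_to_vertex:
  assumes P: "linkage (Restr E W) B N P" and N: "\<forall>u\<in>N. (u, y) \<in> E"
    and "B \<subseteq> W" "W \<subseteq> V" "y \<in> V" "y \<notin> W" "y \<notin> F" "W \<inter> F = {}"
  shows "\<exists>Q. finite Q \<and> card Q = card P \<and> (\<forall>q\<in>Q. Xy_path V E B y q \<and> set q \<inter> F = {})
           \<and> (\<forall>q\<in>Q. \<forall>q'\<in>Q. q \<noteq> q' \<longrightarrow> set q \<inter> set q' \<subseteq> {y})"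
proof -
  have path: "set p \<subseteq> W \<and> Xy_path V E B y (p @ [y])" if "p \<in> P" for p
  proof -
    have p: "p \<noteq> []" "distinct p" "walk (Restr E W) p" "hd p \<in> B" "last p \<in> N"
      using P that unfolding linkage_def by auto
    have pW: "set p \<subseteq> W" using walk_within[OF p(3)] p(4) \<open>B \<subseteq> W\<close> by blast
    have "walk E p" using p(3) walk_mono by blast
    then have w: "walk E (p @ [y])" using p(1,5) N by (simp add: walk_append)
    have "dpath V E (p @ [y])"
      unfolding dpath_def using p(1,2) pW assms(4-6) walk_nth[OF w] by auto
    then show ?thesis using pW p(1,4) unfolding Xy_path_def by simp
  qed
  have "inj_on (\<lambda>p. p @ [y]) P" by (auto simp: inj_on_def)
  moreover have "set p \<inter> set p' = {}" if "p \<in> P" "p' \<in> P" "p \<noteq> p'" for p p'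
    using P that unfolding linkage_def by blast
  ultimately show ?thesis
    using path P assms(7,8) unfolding linkage_def
    by (intro exI[of _ "(\<lambda>p. p @ [y]) ` P"]) (fastforce simp: card_image)
qed

lemma separator_bounds_cut:
  assumes sep: "separates (Restr E W) B {u \<in> W. (u, y) \<in> E} S" and "y \<notin> B"
  obtains A' where "y \<in> A'" "A' \<subseteq> insert y W" "A' \<inter> B = {}"
    "{i \<in> W - A'. \<exists>j\<in>A'. (i, j) \<in> E} \<subseteq> S"
proof
  let ?N = "{u \<in> W. (u, y) \<in> E}"
  let ?R = "Restr (Restr E W) (- S)"
  define A' where "A' = insert y {v \<in> W - S. \<exists>n\<in>?N - S. (v, n) \<in> ?R\<^sup>*}"
  show "y \<in> A'" "A' \<subseteq> insert y W" by (auto simp: A'_def)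
  show "A' \<inter> B = {}" using sep \<open>y \<notin> B\<close> unfolding A'_def separates_def by blast
  show "{i \<in> W - A'. \<exists>j\<in>A'. (i, j) \<in> E} \<subseteq> S"
  proof (rule subsetI, rule ccontr)
    fix i assume "i \<in> {i \<in> W - A'. \<exists>j\<in>A'. (i, j) \<in> E}" "i \<notin> S"
    then obtain j where i: "i \<in> W - S" "i \<notin> A'" "j \<in> A'" "(i, j) \<in> E" by blast
    show False
    proof (cases "j = y")
      case True
      then show False using i unfolding A'_def by blast
    next
      case False
      then obtain n where "j \<in> W - S" "n \<in> ?N - S" "(j, n) \<in> ?R\<^sup>*"
        using i(3) unfolding A'_def by blast
      moreover have "(i, j) \<in> ?R" using i(1,4) \<open>j \<in> W - S\<close> by blast
      ultimately have "i \<in> A'" using i(1) unfolding A'_def by (blast intro: converse_rtrancl_into_rtrancl)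
      then show False using i(2) by blast
    qed
  qed
qed

lemma separator_of_missing_paths:
  assumes "finite V" "E \<subseteq> V \<times> V" "B \<subseteq> W" "W \<subseteq> V" "y \<in> V" "y \<notin> W" "y \<notin> F" "W \<inter> F = {}"
    and no_paths: "\<not> (\<exists>P. finite P \<and> k \<le> card P \<and> (\<forall>p\<in>P. Xy_path V E B y p \<and> set p \<inter> F = {})
        \<and> (\<forall>p\<in>P. \<forall>q\<in>P. p \<noteq> q \<longrightarrow> set p \<inter> set q \<subseteq> {y}))"
  obtains S where "finite S" "separates (Restr E W) B {u \<in> W. (u, y) \<in> E} S" "card S < k"
proof -
  let ?N = "{u \<in> W. (u, y) \<in> E}"
  have fin: "finite (Restr E W)" "finite B" "finite ?N"
    using assms(1-4) by (auto intro: finite_subset)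
  have "\<not> (\<forall>T. finite T \<longrightarrow> separates (Restr E W) B ?N T \<longrightarrow> k \<le> card T)"
  proof
    assume "\<forall>T. finite T \<longrightarrow> separates (Restr E W) B ?N T \<longrightarrow> k \<le> card T"
    then obtain P where P: "linkage (Restr E W) B ?N P" "card P = k"
      using menger[OF fin] by blast
    have "\<forall>u\<in>?N. (u, y) \<in> E" by simp
    from linkage_extends_to_vertex[OF P(1) this assms(3-8)] obtain Q where
      Q: "finite Q" "card Q = k" "\<forall>q\<in>Q. Xy_path V E B y q \<and> set q \<inter> F = {}"
      "\<forall>q\<in>Q. \<forall>q'\<in>Q. q \<noteq> q' \<longrightarrow> set q \<inter> set q' \<subseteq> {y}"
      using P(2) by metis
    then show False using no_paths le_refl[of k] by blast
  qed
  then show ?thesis using that by (auto simp: not_le)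
qed

theorem lemma6:
  fixes V :: "'a set" and E :: "('a \<times> 'a) set" and f :: nat and A B F :: "'a set"
  assumes "simple_digraph V E"
    and "condition1 f V E"
    and "A \<union> B \<union> F = V" and "A \<inter> B = {}" and "A \<inter> F = {}" and "B \<inter> F = {}"
    and "A \<noteq> {}" and "B \<noteq> {}" and "card F \<le> f"
    and "\<not> reaches_paths f V E F B A"
  shows "\<exists>A' B'. A' \<noteq> {} \<and> B' \<noteq> {} \<and> A' \<inter> B' = {} \<and> A' \<union> B' = A \<union> B
           \<and> A' \<subseteq> A \<and> B \<subseteq> B' \<and> \<not> reaches f E B' A'"
proof -
  obtain y where y: "y \<in> A" and no_paths: "\<not> (\<exists>P. finite P \<and> f + 1 \<le> card P
        \<and> (\<forall>p \<in> P. Xy_path V E B y p \<and> set p \<inter> F = {})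
        \<and> (\<forall>p \<in> P. \<forall>q \<in> P. p \<noteq> q \<longrightarrow> set p \<inter> set q \<subseteq> {y}))"
    using assms(10) unfolding reaches_paths_def by blast
  define W where "W = A \<union> B - {y}"
  have W: "B \<subseteq> W" "W \<subseteq> V" "y \<in> V" "y \<notin> W" "y \<notin> F" "W \<inter> F = {}" "y \<notin> B"
    using y assms(3-6) by (auto simp: W_def)
  have "finite V" "E \<subseteq> V \<times> V" using assms(1) by (auto simp: simple_digraph_def)
  from separator_of_missing_paths[OF this W(1-6) no_paths] obtain S
    where S: "finite S" "separates (Restr E W) B {u \<in> W. (u, y) \<in> E} S" "card S < f + 1" .
  obtain A' where A': "y \<in> A'" "A' \<subseteq> insert y W" "A' \<inter> B = {}"
      "{i \<in> W - A'. \<exists>j\<in>A'. (i, j) \<in> E} \<subseteq> S"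
    using separator_bounds_cut[OF S(2) W(7)] by blast
  have "card {i \<in> W - A'. \<exists>j\<in>A'. (i, j) \<in> E} \<le> f"
    using card_mono[OF S(1) A'(4)] S(3) by linarith
  then have "\<not> reaches f E (W - A') A'" by (simp add: reaches_def)
  moreover have "A' \<union> (W - A') = A \<union> B" using A'(1,2) y by (auto simp: W_def)
  ultimately show ?thesis
    using A' W(1) assms(8) by (intro exI[of _ A'] exI[of _ "W - A'"]) (auto simp: W_def)
qed

end
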